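(* Let $r$ and $k$ be integers with $1 \le k \le r$. There exists $n_0 = n_0(r,k)$ such that for every $n \ge n_0$ the following holds. Let $\mathcal{H}$ be an intersecting $r$-uniform hypergraph on $n$ vertices with minimum positive co-degree $\delta_{r-1}^+(\mathcal{H}) \ge k$, and suppose $\mathcal{H}$ has the maximum number of hyperedges among all intersecting $r$-uniform $n$-vertex hypergraphs with minimum positive co-degree at least $k$. Then $\mathcal{H}$ is a $k$-kernel system.
   Context: A hypergraph is intersecting if every two of its hyperedges share at least one vertex. For a non-empty $r$-uniform hypergraph $\mathcal{H}$, the minimum positive co-degree $\delta_{r-1}^+(\mathcal{H})$ is the largest integer $k$ such that every $(r-1)$-set of vertices that is contained in at least one hyperedge of $\mathcal{H}$ is contained in at least $k$ distinct hyperedges of $\mathcal{H}$; for the empty hypergraph it is defined to be $0$. Given integers $r \ge k \ge 1$, an $r$-uniform $k$-kernel system on vertex set $V$ is a hypergraph whose hyperedge set is $\{E \in \binom{V}{r} : |E \cap X| \ge k\}$ for some distinguished set $X \subseteq V$ with $|X| = 2k-1$ (the kernel). *)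

theory Defs
  imports Main
begin

definition uniform_hg :: "nat \<Rightarrow> 'a set \<Rightarrow> 'a set set \<Rightarrow> bool" where
  "uniform_hg r V H \<longleftrightarrow> (\<forall>E\<in>H. E \<subseteq> V \<and> card E = r)"

definition intersecting :: "'a set set \<Rightarrow> bool" where
  "intersecting H \<longleftrightarrow> (\<forall>E\<in>H. \<forall>F\<in>H. E \<inter> F \<noteq> {})"

definition min_pos_codegree :: "nat \<Rightarrow> 'a set set \<Rightarrow> nat" where
  "min_pos_codegree r H = (if H = {} then 0 else
     (GREATEST k. \<forall>S. card S = r - 1 \<and> (\<exists>E\<in>H. S \<subseteq> E) \<longrightarrow> k \<le> card {E\<in>H. S \<subseteq> E}))"

definition kernel_system :: "nat \<Rightarrow> nat \<Rightarrow> 'a set \<Rightarrow> 'a set set \<Rightarrow> bool" where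
  "kernel_system r k V H \<longleftrightarrow> (\<exists>X. X \<subseteq> V \<and> card X = 2 * k - 1 \<and>
     H = {E. E \<subseteq> V \<and> card E = r \<and> k \<le> card (E \<inter> X)})"

end

theory Submission
  imports Defs Complex_Main "HOL-Library.FuncSet"
begin

text \<open>Kernel systems are admissible and have about \<open>n choose (r - k)\<close> edges, so an extremal
  \<open>H\<close> is at least that large. Using the co-degree condition repeatedly one finds a set \<open>Z\<close>, of
  size bounded in terms of \<open>r\<close> and \<open>k\<close>, that every edge meets in at least \<open>k\<close> vertices. Only
  \<open>O(n^(r-k-1))\<close> edges have a trace on \<open>Z\<close> of more than \<open>k\<close> vertices, so many edges have
  \<open>k\<close>-element traces. Call such a trace heavy at level \<open>i\<close> if it is the trace of many edges,
  for thresholds decreasing geometrically in \<open>i\<close>; the heavy traces grow with \<open>i\<close>, so at some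
  level they stop growing, and there they form an intersecting \<open>k\<close>-uniform family with
  positive co-degree at least \<open>k\<close>. Such a family consists of all \<open>k\<close>-subsets of a
  \<open>(2k-1)\<close>-set \<open>X\<close>. Every edge meets every heavy trace, hence meets \<open>X\<close> in at least \<open>k\<close>
  vertices, so \<open>H\<close> lies in the kernel system with kernel \<open>X\<close>, and maximality gives equality.
  For \<open>k = r\<close> the last two steps apply to \<open>H\<close> itself.\<close>

definition codegree_at_least :: "nat \<Rightarrow> nat \<Rightarrow> 'a set set \<Rightarrow> bool" where
  "codegree_at_least r k H \<longleftrightarrow>
     (\<forall>S E. E \<in> H \<longrightarrow> S \<subseteq> E \<longrightarrow> card S = r - 1 \<longrightarrow> k \<le> card {F\<in>H. S \<subseteq> F})"

lemma min_pos_codegree_ge_iff: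
  assumes "finite H" "H \<noteq> {}" "\<forall>E\<in>H. card E = r"
  shows "k \<le> min_pos_codegree r H \<longleftrightarrow> codegree_at_least r k H"
proof -
  define P where
    "P = (\<lambda>m. \<forall>S. card S = r - 1 \<and> (\<exists>E\<in>H. S \<subseteq> E) \<longrightarrow> m \<le> card {E\<in>H. S \<subseteq> E})"
  have mpc: "min_pos_codegree r H = Greatest P"
    unfolding min_pos_codegree_def P_def using assms(2) by simp
  obtain E0 where "E0 \<in> H" using assms(2) by blast
  then obtain S0 where S0: "S0 \<subseteq> E0" "card S0 = r - 1" "E0 \<in> H"
    using assms(3) obtain_subset_with_card_n[of "r - 1" E0] by force
  have bound: "m \<le> card H" if "P m" for m
  proof -
    have "m \<le> card {E\<in>H. S0 \<subseteq> E}" using that S0 unfolding P_def by blast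
    also have "\<dots> \<le> card H" using assms(1) by (intro card_mono) auto
    finally show ?thesis .
  qed
  have P_mono: "P m'" if "P m" "m' \<le> m" for m m'
    using that le_trans unfolding P_def by blast
  have "P (Greatest P)" using GreatestI_nat[of P 0 "card H"] bound by (simp add: P_def)
  then have "k \<le> Greatest P \<longleftrightarrow> P k"
    using P_mono Greatest_le_nat[of P k "card H"] bound by blast
  moreover have "P k \<longleftrightarrow> codegree_at_least r k H" unfolding P_def codegree_at_least_def by blast
  ultimately show ?thesis unfolding mpc by simp
qed

definition link :: "'a set set \<Rightarrow> 'a set \<Rightarrow> 'a set" where
  "link H S = {y. y \<notin> S \<and> insert y S \<in> H}"

lemma card_link_ge:
  assumes "finite H" and uniform: "\<forall>E\<in>H. finite E \<and> card E = r"
    and "codegree_at_least r k H" and "W \<in> H" "x \<in> W"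
  shows "k \<le> card (link H (W - {x}))"
proof -
  let ?S = "W - {x}"
  have "link H ?S \<subseteq> \<Union>H" by (auto simp: link_def)
  moreover have "finite (\<Union>H)" using assms(1) uniform by blast
  ultimately have "finite (link H ?S)" by (rule finite_subset)
  have "finite W" "card W = r" using uniform assms(4) by auto
  then have card_S: "card ?S = r - 1" and "0 < r" using assms(5) by (auto simp: card_gt_0_iff)
  have "{F\<in>H. ?S \<subseteq> F} \<subseteq> (\<lambda>y. insert y ?S) ` link H ?S"
  proof
    fix F assume F: "F \<in> {F\<in>H. ?S \<subseteq> F}"
    then have "finite F" "card F = r" "?S \<subseteq> F" using uniform by auto
    then have "card (F - ?S) = 1"
      using card_S \<open>0 < r\<close> \<open>finite W\<close> by (simp add: card_Diff_subset)
    then obtain y where "F - ?S = {y}" by (auto simp: card_Suc_eq)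
    then have "F = insert y ?S" using F by blast
    then show "F \<in> (\<lambda>y. insert y ?S) ` link H ?S"
      using F \<open>F - ?S = {y}\<close> by (auto simp: link_def)
  qed
  then have "card {F\<in>H. ?S \<subseteq> F} \<le> card ((\<lambda>y. insert y ?S) ` link H ?S)"
    using \<open>finite (link H ?S)\<close> by (intro card_mono) auto
  also have "\<dots> \<le> card (link H ?S)" by (rule card_image_le) fact
  finally have "card {F\<in>H. ?S \<subseteq> F} \<le> card (link H ?S)" .
  moreover have "k \<le> card {F\<in>H. ?S \<subseteq> F}"
    using assms(3,4) card_S unfolding codegree_at_least_def by blast
  ultimately show ?thesis by simp
qed

lemma ex_edge_disjoint_from_small_set:
  assumes "finite H" "H \<noteq> {}" "\<forall>E\<in>H. finite E \<and> card E = r"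
    and "codegree_at_least r k H" "finite T" "card T < k"
  shows "\<exists>E\<in>H. E \<inter> T = {}"
proof -
  have "\<exists>E'\<in>H. E' \<inter> T = {}" if "E \<in> H" "card (E \<inter> T) = m" for E m
    using that
  proof (induction m arbitrary: E)
    case 0
    then show ?case using assms(5) by auto
  next
    case (Suc m)
    then obtain x where x: "x \<in> E \<inter> T" by (metis card.empty ex_in_conv nat.distinct(1))
    have "k \<le> card (link H (E - {x}))" using card_link_ge[OF assms(1,3,4) Suc.prems(1)] x by blast
    then have "\<not> link H (E - {x}) \<subseteq> T" using card_mono[OF assms(5)] assms(6) by (meson leD le_trans)
    then obtain y where "y \<in> link H (E - {x})" "y \<notin> T" by blast
    then have "insert y (E - {x}) \<in> H" "insert y (E - {x}) \<inter> T = (E \<inter> T) - {x}"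
      unfolding link_def by auto
    moreover have "card ((E \<inter> T) - {x}) = m" using Suc.prems(2) x by simp
    ultimately show ?case using Suc.IH by metis
  qed
  then show ?thesis using assms(2) by blast
qed

lemma transversal_step:
  assumes "finite H" "H \<noteq> {}" and uniform: "\<forall>E\<in>H. finite E \<and> card E = r"
    and "codegree_at_least r k H" and intersecting: "intersecting H"
    and "finite Z" "j < k" and Z: "\<forall>E\<in>H. j \<le> card (E \<inter> Z)"
  shows "\<exists>Z'. finite Z' \<and> card Z' \<le> card Z + 2 ^ card Z * r \<and> (\<forall>E\<in>H. Suc j \<le> card (E \<inter> Z'))"
proof -
  define TT where "TT = {T. T \<subseteq> Z \<and> card T = j}"
  have "\<exists>F\<in>H. F \<inter> T = {}" if "T \<in> TT" for T
  proof -
    have "T \<subseteq> Z" "card T = j" using that by (auto simp: TT_def)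
    then show ?thesis
      using ex_edge_disjoint_from_small_set[OF assms(1-4) finite_subset[OF _ \<open>finite Z\<close>]] \<open>j < k\<close>
      by simp
  qed
  then obtain f where f: "\<And>T. T \<in> TT \<Longrightarrow> f T \<in> H \<and> f T \<inter> T = {}" by metis
  define Z' where "Z' = Z \<union> (\<Union>T\<in>TT. f T)"
  have "finite TT" using \<open>finite Z\<close> unfolding TT_def by simp
  have "card TT \<le> 2 ^ card Z"
    using card_mono[of "Pow Z" TT] \<open>finite Z\<close> by (auto simp: TT_def card_Pow)
  have "card (\<Union>T\<in>TT. f T) \<le> (\<Sum>T\<in>TT. card (f T))" by (rule card_UN_le[OF \<open>finite TT\<close>])
  also have "\<dots> = card TT * r" using f uniform by simp
  also have "\<dots> \<le> 2 ^ card Z * r" using \<open>card TT \<le> 2 ^ card Z\<close> by simp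
  finally have "card Z' \<le> card Z + 2 ^ card Z * r"
    unfolding Z'_def using card_Un_le[of Z "\<Union>T\<in>TT. f T"] by linarith
  moreover have "finite Z'"
    unfolding Z'_def using \<open>finite Z\<close> \<open>finite TT\<close> f uniform by blast
  moreover have "Suc j \<le> card (E \<inter> Z')" if E: "E \<in> H" for E
  proof -
    obtain T where T: "T \<subseteq> E \<inter> Z" "card T = j"
      using obtain_subset_with_card_n[of j "E \<inter> Z"] Z E by blast
    then have "T \<in> TT" unfolding TT_def by blast
    then obtain y where y: "y \<in> E" "y \<in> f T" "y \<notin> T"
      using f E intersecting unfolding intersecting_def by blast
    have "finite T" using T(1) \<open>finite Z\<close> finite_subset by blast
    have "insert y T \<subseteq> E \<inter> Z'" using T(1) y \<open>T \<in> TT\<close> unfolding Z'_def by blast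
    then have "card (insert y T) \<le> card (E \<inter> Z')" using \<open>finite Z'\<close> by (intro card_mono) auto
    then show ?thesis using T(2) y(3) \<open>finite T\<close> by simp
  qed
  ultimately show ?thesis by blast
qed

fun transversal_bound :: "nat \<Rightarrow> nat \<Rightarrow> nat" where
  "transversal_bound r 0 = 0"
| "transversal_bound r (Suc j) = transversal_bound r j + 2 ^ transversal_bound r j * r"

lemma ex_bounded_transversal:
  assumes "finite H" "H \<noteq> {}" "\<forall>E\<in>H. finite E \<and> card E = r"
    and "codegree_at_least r k H" "intersecting H" "j \<le> k"
  shows "\<exists>Z. finite Z \<and> card Z \<le> transversal_bound r j \<and> (\<forall>E\<in>H. j \<le> card (E \<inter> Z))"
  using \<open>j \<le> k\<close>
proof (induction j)
  case 0
  show ?case by (intro exI[of _ "{}"]) auto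
next
  case (Suc j)
  then obtain Z where Z: "finite Z" "card Z \<le> transversal_bound r j" "\<forall>E\<in>H. j \<le> card (E \<inter> Z)"
    by auto
  then obtain Z' where Z': "finite Z'" "card Z' \<le> card Z + 2 ^ card Z * r"
    "\<forall>E\<in>H. Suc j \<le> card (E \<inter> Z')"
    using transversal_step[OF assms(1-5) Z(1) _ Z(3)] Suc.prems by auto
  have "card Z + 2 ^ card Z * r \<le> transversal_bound r (Suc j)"
    using Z(2) by (simp add: add_mono power_increasing)
  then show ?case using Z' by (meson le_trans)
qed

definition kernel_family :: "nat \<Rightarrow> nat \<Rightarrow> 'a set \<Rightarrow> 'a set \<Rightarrow> 'a set set" where
  "kernel_family r k V X = {E. E \<subseteq> V \<and> card E = r \<and> k \<le> card (E \<inter> X)}"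

lemma kernel_system_iff:
  "kernel_system r k V H \<longleftrightarrow> (\<exists>X\<subseteq>V. card X = 2 * k - 1 \<and> H = kernel_family r k V X)"
  unfolding kernel_system_def kernel_family_def by blast

lemma finite_kernel_family: "finite V \<Longrightarrow> finite (kernel_family r k V X)"
  unfolding kernel_family_def by (rule finite_subset[of _ "Pow V"]) auto

lemma kernel_family_intersecting:
  assumes "finite X" "card X < 2 * k"
  shows "intersecting (kernel_family r k V X)"
  unfolding intersecting_def
proof (intro ballI notI)
  fix E F assume "E \<in> kernel_family r k V X" "F \<in> kernel_family r k V X" "E \<inter> F = {}"
  then have "card (E \<inter> X) + card (F \<inter> X) = card ((E \<inter> X) \<union> (F \<inter> X))"
    using assms(1) by (intro card_Un_disjoint[symmetric]) auto
  also have "\<dots> \<le> card X" using assms(1) by (intro card_mono) auto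
  finally show False
    using \<open>E \<in> _\<close> \<open>F \<in> _\<close> assms(2) unfolding kernel_family_def by auto
qed

lemma card_kernel_family_containing_ge:
  assumes "finite V" "S \<subseteq> V" "card S = r - 1" "1 \<le> r" "Y \<subseteq> V - S"
    and "\<And>y. y \<in> Y \<Longrightarrow> k \<le> card (insert y S \<inter> X)"
  shows "card Y \<le> card {F \<in> kernel_family r k V X. S \<subseteq> F}"
proof -
  have "finite S" using assms(1,2) finite_subset by blast
  have "inj_on (\<lambda>y. insert y S) Y"
    using assms(5) by (intro inj_onI) blast
  then have "card Y = card ((\<lambda>y. insert y S) ` Y)" by (rule card_image[symmetric])
  moreover have "(\<lambda>y. insert y S) ` Y \<subseteq> {F \<in> kernel_family r k V X. S \<subseteq> F}"
  proof
    fix F assume "F \<in> (\<lambda>y. insert y S) ` Y"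
    then obtain y where "y \<in> Y" "F = insert y S" by blast
    moreover have "card (insert y S) = r" using \<open>y \<in> Y\<close> assms(3-5) \<open>finite S\<close> by auto
    ultimately show "F \<in> {F \<in> kernel_family r k V X. S \<subseteq> F}"
      using assms(2,5,6) by (auto simp: kernel_family_def)
  qed
  then have "card ((\<lambda>y. insert y S) ` Y) \<le> card {F \<in> kernel_family r k V X. S \<subseteq> F}"
    using finite_kernel_family[OF assms(1)] by (intro card_mono) auto
  ultimately show ?thesis by simp
qed

lemma codegree_kernel_family:
  assumes "finite V" "X \<subseteq> V" "card X = 2 * k - 1" "1 \<le> k" "k \<le> r" "r + k \<le> card V"
  shows "codegree_at_least r k (kernel_family r k V X)"
  unfolding codegree_at_least_def
proof (intro allI impI)
  fix S E assume E: "E \<in> kernel_family r k V X" and "S \<subseteq> E" and S: "card S = r - 1"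
  then have "E \<subseteq> V" "card E = r" "k \<le> card (E \<inter> X)" by (auto simp: kernel_family_def)
  have "finite E" using \<open>E \<subseteq> V\<close> assms(1) finite_subset by blast
  then have "finite S" using \<open>S \<subseteq> E\<close> finite_subset by blast
  have "finite X" using assms(1,2) finite_subset by blast
  let ?N = "card {F \<in> kernel_family r k V X. S \<subseteq> F}"
  have count: "card Y \<le> ?N" if "Y \<subseteq> V - S" "\<And>y. y \<in> Y \<Longrightarrow> k \<le> card (insert y S \<inter> X)" for Y
    using card_kernel_family_containing_ge[OF assms(1) _ S _ that] \<open>S \<subseteq> E\<close> \<open>E \<subseteq> V\<close> assms(4,5)
    by auto
  show "k \<le> ?N"
  proof (cases "k \<le> card (S \<inter> X)")
    case True
    have "card (S \<inter> X) \<le> card (insert y S \<inter> X)" for y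
      using \<open>finite X\<close> by (intro card_mono) auto
    then have "card (V - S) \<le> ?N" using True by (intro count) (auto intro: le_trans)
    moreover have "card (V - S) = card V - card S"
      using \<open>S \<subseteq> E\<close> \<open>E \<subseteq> V\<close> \<open>finite S\<close> by (intro card_Diff_subset) auto
    ultimately show ?thesis using S assms(6) by linarith
  next
    case False
    have "card (E - S) = 1"
      using \<open>S \<subseteq> E\<close> \<open>finite S\<close> \<open>card E = r\<close> S assms(4,5) by (simp add: card_Diff_subset)
    have "card (E \<inter> X) \<le> card ((S \<inter> X) \<union> (E - S))"
      using \<open>finite E\<close> \<open>finite S\<close> by (intro card_mono) auto
    also have "\<dots> \<le> card (S \<inter> X) + 1" using card_Un_le \<open>card (E - S) = 1\<close> by metis
    finally have SX: "card (S \<inter> X) = k - 1" using False \<open>k \<le> card (E \<inter> X)\<close> by linarith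
    have "card (X - S) = card X - card (X \<inter> S)" by (rule card_Diff_subset_Int) (use \<open>finite S\<close> in auto)
    then have "card (X - S) = k" using SX assms(3,4) by (simp add: Int_commute)
    moreover have "card (X - S) \<le> ?N"
    proof (rule count)
      show "X - S \<subseteq> V - S" using assms(2) by blast
      fix y assume "y \<in> X - S"
      then have "insert y S \<inter> X = insert y (S \<inter> X)" by blast
      then show "k \<le> card (insert y S \<inter> X)" using \<open>y \<in> X - S\<close> SX \<open>finite S\<close> by simp
    qed
    ultimately show ?thesis by simp
  qed
qed

lemma card_kernel_family_ge:
  assumes "finite V" "X \<subseteq> V" "card X = 2 * k - 1" "1 \<le> k" "k \<le> r"
  shows "(card V - (2 * k - 1)) choose (r - k) \<le> card (kernel_family r k V X)"
proof -
  have "k \<le> card X" using assms(3,4) by simp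
  then obtain A where A: "A \<subseteq> X" "card A = k" "finite A" by (rule obtain_subset_with_card_n)
  let ?B = "{B. B \<subseteq> V - X \<and> card B = r - k}"
  have inj: "inj_on ((\<union>) A) ?B"
  proof (rule inj_onI)
    fix B1 B2 assume "B1 \<in> ?B" "B2 \<in> ?B" "A \<union> B1 = A \<union> B2"
    then show "B1 = B2" using A(1) by blast
  qed
  have sub: "(\<union>) A ` ?B \<subseteq> kernel_family r k V X"
  proof
    fix E assume "E \<in> (\<union>) A ` ?B"
    then obtain B where B: "B \<subseteq> V - X" "card B = r - k" "E = A \<union> B" by blast
    have "finite B" using B(1) assms(1) finite_subset by blast
    have "card E = r" using B A A(3) \<open>finite B\<close> assms(5) by (subst B(3), subst card_Un_disjoint) auto
    moreover have "E \<inter> X = A" using A(1) B(1,3) by blast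
    ultimately show "E \<in> kernel_family r k V X"
      using A B assms(2) unfolding kernel_family_def by auto
  qed
  have "card ?B = card ((\<union>) A ` ?B)" using inj by (rule card_image[symmetric])
  also have "\<dots> \<le> card (kernel_family r k V X)"
    using sub by (rule card_mono[OF finite_kernel_family[OF assms(1)]])
  finally have "card ?B \<le> card (kernel_family r k V X)" .
  moreover have "card (V - X) = card V - (2 * k - 1)"
    using assms(2,3) finite_subset[OF assms(2,1)] by (simp add: card_Diff_subset)
  ultimately show ?thesis using n_subsets[of "V - X" "r - k"] assms(1) by simp
qed

lemma kernel_family_admissible:
  assumes "finite V" "X \<subseteq> V" "card X = 2 * k - 1" "1 \<le> k" "k \<le> r" "r + k \<le> card V"
  shows "uniform_hg r V (kernel_family r k V X) \<and> intersecting (kernel_family r k V X)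
    \<and> k \<le> min_pos_codegree r (kernel_family r k V X)"
proof -
  have "0 < (card V - (2 * k - 1)) choose (r - k)" using assms(5,6) by simp
  then have "kernel_family r k V X \<noteq> {}"
    using card_kernel_family_ge[OF assms(1-5)] by auto
  moreover have "\<forall>E\<in>kernel_family r k V X. card E = r" by (simp add: kernel_family_def)
  ultimately have "k \<le> min_pos_codegree r (kernel_family r k V X)"
    using min_pos_codegree_ge_iff[OF finite_kernel_family[OF assms(1)]] codegree_kernel_family[OF assms]
    by blast
  moreover have "intersecting (kernel_family r k V X)"
    using assms(3,4) by (intro kernel_family_intersecting finite_subset[OF assms(2,1)]) simp
  ultimately show ?thesis by (auto simp: uniform_hg_def kernel_family_def)
qed

lemma card_Int_ge_if_meets_k_subsets:
  assumes "finite X" "2 * k - 1 \<le> card X" and meets: "\<And>U. U \<subseteq> X \<Longrightarrow> card U = k \<Longrightarrow> U \<inter> E \<noteq> {}"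
  shows "k \<le> card (E \<inter> X)"
proof (rule ccontr)
  assume "\<not> k \<le> card (E \<inter> X)"
  moreover have "card (X - E) = card X - card (X \<inter> E)" by (rule card_Diff_subset_Int) (use assms(1) in auto)
  ultimately have "k \<le> card (X - E)" using assms(2) by (simp add: Int_commute)
  then obtain U where "U \<subseteq> X - E" "card U = k" using obtain_subset_with_card_n by metis
  then show False using meets by blast
qed

locale intersecting_codegree_family =
  fixes k :: nat and G :: "'a set set"
  assumes finite_G: "finite G" and uniform: "\<forall>W\<in>G. finite W \<and> card W = k"
    and intersecting_G: "intersecting G" and codegree: "codegree_at_least k k G"
begin

text \<open>Every completion of \<open>B - {z}\<close> meets \<open>A\<close>, and can do so only in its new vertex; as there
  are at least \<open>k = card A\<close> completions, every vertex of \<open>A\<close> completes \<open>B - {z}\<close>.\<close>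

lemma exchange:
  assumes "A \<in> G" "B \<in> G" "A \<inter> B = {z}" "w \<in> A"
  shows "insert w (B - {z}) \<in> G"
proof -
  have "link G (B - {z}) \<subseteq> A"
  proof
    fix y assume "y \<in> link G (B - {z})"
    then have "A \<inter> insert y (B - {z}) \<noteq> {}"
      using intersecting_G assms(1) unfolding link_def intersecting_def by blast
    then show "y \<in> A" using assms(3) by blast
  qed
  moreover have "k \<le> card (link G (B - {z}))"
    using card_link_ge[OF finite_G uniform codegree assms(2)] assms(3) by blast
  moreover have "finite A" "card A = k" using uniform assms(1) by auto
  ultimately have "link G (B - {z}) = A" by (metis card_seteq)
  then show ?thesis using assms(4) unfolding link_def by blast
qed

text \<open>For a pair minimising \<open>card (E \<inter> F)\<close> and \<open>x \<in> E \<inter> F\<close>, every completion of \<open>F - {x}\<close>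
  lies in \<open>insert x (E - F)\<close>, so the co-degree condition forces \<open>card (E \<inter> F) \<le> 1\<close>.\<close>

lemma ex_edges_meeting_in_one_vertex:
  assumes "G \<noteq> {}"
  shows "\<exists>E\<in>G. \<exists>F\<in>G. \<exists>x. E \<inter> F = {x}"
proof -
  obtain E0 where "E0 \<in> G" using assms by blast
  then obtain E F where EF: "E \<in> G" "F \<in> G"
    and min: "\<And>E' F'. E' \<in> G \<Longrightarrow> F' \<in> G \<Longrightarrow> card (E \<inter> F) \<le> card (E' \<inter> F')"
    using ex_has_least_nat[of "\<lambda>(E, F). E \<in> G \<and> F \<in> G" "(E0, E0)" "\<lambda>(E, F). card (E \<inter> F)"]
    by force
  have "finite E" "card E = k" using uniform EF by auto
  have "E \<inter> F \<noteq> {}" using intersecting_G EF unfolding intersecting_def by blast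
  then obtain x where x: "x \<in> E \<inter> F" by blast
  have "link G (F - {x}) \<subseteq> insert x (E - F)"
  proof
    fix y assume y: "y \<in> link G (F - {x})"
    show "y \<in> insert x (E - F)"
    proof (rule ccontr)
      assume "y \<notin> insert x (E - F)"
      then have "E \<inter> insert y (F - {x}) = (E \<inter> F) - {x}" using y unfolding link_def by blast
      moreover have "card ((E \<inter> F) - {x}) < card (E \<inter> F)"
        using x \<open>finite E\<close> by (meson card_Diff1_less finite_Int)
      ultimately show False using min[OF EF(1)] y unfolding link_def by fastforce
    qed
  qed
  then have "card (link G (F - {x})) \<le> card (insert x (E - F))"
    using \<open>finite E\<close> by (intro card_mono) auto
  also have "\<dots> \<le> card (E - F) + 1" using \<open>finite E\<close> by (simp add: card_insert_if)
  also have "card (E - F) = k - card (E \<inter> F)"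
    using \<open>finite E\<close> \<open>card E = k\<close> by (simp add: card_Diff_subset_Int)
  finally have "card (E \<inter> F) \<le> 1"
    using card_link_ge[OF finite_G uniform codegree EF(2)] x card_mono[OF \<open>finite E\<close>, of "E \<inter> F"]
      \<open>card E = k\<close> by fastforce
  then have "card (E \<inter> F) = 1" using \<open>E \<inter> F \<noteq> {}\<close> \<open>finite E\<close> by (simp add: le_eq_less_or_eq)
  then show ?thesis using EF by (metis card_1_singletonE)
qed

lemma exchange_step:
  assumes "U \<subseteq> X" "U \<in> G" "\<forall>z\<in>U. insert z (X - U) \<in> G" "z \<in> U" "w \<in> X - U"
  defines "U' \<equiv> insert w (U - {z})"
  shows "U' \<in> G" "\<forall>z'\<in>U'. insert z' (X - U') \<in> G"
proof -
  define B where "B = insert z (X - U)"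
  have "B \<in> G" "B \<inter> U = {z}" using assms(3,4) B_def by auto
  then show "U' \<in> G" using exchange[OF \<open>B \<in> G\<close> assms(2)] assms(5) B_def U'_def by blast
  moreover have "U' \<inter> B = {w}" using assms(4,5) B_def U'_def by blast
  moreover have "B - {w} = X - U'" using assms(1,4,5) B_def U'_def by blast
  ultimately show "\<forall>z'\<in>U'. insert z' (X - U') \<in> G" using exchange \<open>B \<in> G\<close> by metis
qed

text \<open>Starting from \<open>E\<close>, every \<open>k\<close>-subset of \<open>E \<union> F\<close> is reached by single exchanges. The
  invariant also carries, for each \<open>(k-1)\<close>-subset of \<open>U\<close>, its complement in \<open>E \<union> F\<close>: this is
  the edge meeting \<open>U\<close> in one vertex that the next exchange needs.\<close>

lemma k_subsets_mem:
  assumes E: "E \<in> G" and F: "F \<in> G" and x: "E \<inter> F = {x}"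
    and "U \<subseteq> E \<union> F" "card U = k"
  shows "U \<in> G \<and> (\<forall>z\<in>U. insert z ((E \<union> F) - U) \<in> G)"
  using assms(4,5)
proof (induction "card (E - U)" arbitrary: U)
  case 0
  have "finite E" "card E = k" "finite U" using uniform E \<open>U \<subseteq> E \<union> F\<close> F by (auto intro: finite_subset)
  then have "E \<subseteq> U" using 0 by auto
  then have "E = U" using card_seteq[OF \<open>finite U\<close>] \<open>card E = k\<close> 0 by simp
  moreover have "(E \<union> F) - E = F - {x}" using x by blast
  ultimately show ?case using exchange[OF E F x] E by simp
next
  case (Suc m)
  have "finite E" "card E = k" "finite U" using uniform E \<open>U \<subseteq> E \<union> F\<close> F by (auto intro: finite_subset)
  obtain z where z: "z \<in> E" "z \<notin> U" using Suc.hyps(2) by (metis Diff_iff card.empty ex_in_conv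
        nat.distinct(1))
  have "card (U - E) = card (E - U)"
    using \<open>finite E\<close> \<open>finite U\<close> \<open>card E = k\<close> Suc.prems(2) by (simp add: card_Diff_subset_Int Int_commute)
  then obtain w where w: "w \<in> U" "w \<notin> E"
    using Suc.hyps(2) by (metis Diff_iff card.empty ex_in_conv nat.distinct(1))
  define U0 where "U0 = insert z (U - {w})"
  have "0 < card U" using w(1) \<open>finite U\<close> by (auto simp: card_gt_0_iff)
  then have "U0 \<subseteq> E \<union> F" "card U0 = k"
    using Suc.prems z w \<open>finite U\<close> by (auto simp: U0_def card.insert_remove)
  moreover have "E - U0 = (E - U) - {z}" using w by (auto simp: U0_def)
  then have "m = card (E - U0)" using Suc.hyps(2) z by simp
  ultimately have "U0 \<subseteq> E \<union> F" "U0 \<in> G" "\<forall>z\<in>U0. insert z ((E \<union> F) - U0) \<in> G"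
    using Suc.hyps(1) by auto
  moreover have "insert w (U0 - {z}) = U" using w z by (auto simp: U0_def)
  ultimately show ?case
    using exchange_step[of U0 "E \<union> F" z w] w z Suc.prems(1) by (auto simp: U0_def)
qed

theorem ex_kernel:
  assumes "G \<noteq> {}"
  shows "\<exists>X\<subseteq>\<Union>G. card X = 2 * k - 1 \<and> (\<forall>U\<subseteq>X. card U = k \<longrightarrow> U \<in> G)"
proof -
  obtain E F x where EF: "E \<in> G" "F \<in> G" "E \<inter> F = {x}"
    using ex_edges_meeting_in_one_vertex[OF assms] by blast
  have "card (E \<union> F) = 2 * k - 1"
    using card_Un_Int[of E F] uniform EF by simp
  moreover have "E \<union> F \<subseteq> \<Union>G" using EF by blast
  ultimately show ?thesis using k_subsets_mem[OF EF] by blast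
qed

lemma ex_kernel_meeting_edges:
  assumes "G \<noteq> {}"
  shows "\<exists>X\<subseteq>\<Union>G. card X = 2 * k - 1 \<and> (\<forall>E\<in>G. k \<le> card (E \<inter> X))"
proof -
  obtain X where X: "X \<subseteq> \<Union>G" "card X = 2 * k - 1"
    and k_subsets: "\<forall>U\<subseteq>X. card U = k \<longrightarrow> U \<in> G"
    using ex_kernel[OF assms] by blast
  have "finite X" using X(1) finite_G uniform by (meson finite_Union finite_subset)
  have "k \<le> card (E \<inter> X)" if "E \<in> G" for E
  proof (rule card_Int_ge_if_meets_k_subsets[OF \<open>finite X\<close> eq_imp_le[OF X(2)[symmetric]]])
    fix U assume "U \<subseteq> X" "card U = k"
    then show "U \<inter> E \<noteq> {}" using k_subsets intersecting_G that unfolding intersecting_def by blast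
  qed
  then show ?thesis using X by blast
qed

end

lemma card_edges_containing_le:
  assumes "finite V" "\<forall>E\<in>H. E \<subseteq> V \<and> card E = r" "finite S"
  shows "card {E\<in>H. S \<subseteq> E} \<le> card V choose (r - card S)"
proof -
  let ?A = "{E\<in>H. S \<subseteq> E}"
  have "inj_on (\<lambda>E. E - S) ?A" by (rule inj_onI) blast
  then have "card ?A = card ((\<lambda>E. E - S) ` ?A)" by (rule card_image[symmetric])
  also have "\<dots> \<le> card {D. D \<subseteq> V \<and> card D = r - card S}"
  proof (rule card_mono)
    show "finite {D. D \<subseteq> V \<and> card D = r - card S}" using assms(1) by simp
    show "(\<lambda>E. E - S) ` ?A \<subseteq> {D. D \<subseteq> V \<and> card D = r - card S}"
      using assms finite_subset by (fastforce simp: card_Diff_subset)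
  qed
  also have "\<dots> = card V choose (r - card S)" using n_subsets[OF assms(1)] .
  finally show ?thesis .
qed

locale trace_setting =
  fixes r k :: nat and V :: "'a set" and H :: "'a set set" and Z :: "'a set" and B :: nat
  assumes k_pos: "1 \<le> k" and finite_V: "finite V"
    and edges: "\<forall>E\<in>H. E \<subseteq> V \<and> card E = r" and intersecting_H: "intersecting H"
    and codegree: "codegree_at_least r k H"
    and finite_Z: "finite Z" and card_Z: "card Z \<le> B" and transversal: "\<forall>E\<in>H. k \<le> card (E \<inter> Z)"
begin

text \<open>\<open>superset_bound\<close> bounds the number of edges containing a fixed \<open>(k+1)\<close>-set and
  \<open>subsets_bound\<close> the number of possible traces. The thresholds drop by the factor
  \<open>subsets_bound\<close> from one level to the next, which is what the pigeonhole step in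
  \<open>ex_heavy_link_class\<close> needs.\<close>

definition trace_class :: "'a set \<Rightarrow> 'a set set" where
  "trace_class W = {E\<in>H. E \<inter> Z = W}"

definition superset_bound :: nat where
  "superset_bound = card V choose (r - k - 1)"

definition subsets_bound :: nat where
  "subsets_bound = 2 ^ B"

definition threshold :: "nat \<Rightarrow> nat" where
  "threshold i = r * superset_bound * subsets_bound ^ (subsets_bound - i)"

definition heavy :: "nat \<Rightarrow> 'a set set" where
  "heavy i = {W. W \<subseteq> Z \<and> card W = k \<and> threshold i < card (trace_class W)}"

lemma finite_H: "finite H"
proof (rule finite_subset)
  show "H \<subseteq> Pow V" using edges by blast
qed (use finite_V in simp)

lemma uniform_H: "\<forall>E\<in>H. finite E \<and> card E = r"
  using edges finite_V finite_subset by blast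

lemma finite_trace_class: "finite (trace_class W)"
  unfolding trace_class_def using finite_H by simp

lemma card_Pow_Z_le: "card (Pow Z) \<le> subsets_bound"
  using finite_Z card_Z unfolding subsets_bound_def by (simp add: card_Pow power_increasing)

lemma finite_heavy: "finite (heavy i)"
proof (rule finite_subset)
  show "heavy i \<subseteq> Pow Z" by (auto simp: heavy_def)
qed (use finite_Z in simp)

lemma threshold_antimono: "i \<le> j \<Longrightarrow> threshold j \<le> threshold i"
  unfolding threshold_def by (intro mult_left_mono power_increasing) (auto simp: subsets_bound_def)

lemma heavy_mono: "i \<le> j \<Longrightarrow> heavy i \<subseteq> heavy j"
  unfolding heavy_def using threshold_antimono by (blast intro: le_less_trans)

lemma threshold_ge: "r * superset_bound \<le> threshold i"
  unfolding threshold_def subsets_bound_def by simp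

lemma threshold_Suc:
  assumes "i < subsets_bound"
  shows "threshold i = subsets_bound * threshold (Suc i)"
proof -
  have "subsets_bound - i = Suc (subsets_bound - Suc i)" using assms by simp
  then show ?thesis unfolding threshold_def by simp
qed

lemma trace_class_empty_if_card_lt: "card W < k \<Longrightarrow> trace_class W = {}"
  using transversal unfolding trace_class_def by force

lemma card_trace_class_le_if_card_gt:
  assumes "W \<subseteq> Z" "k < card W"
  shows "card (trace_class W) \<le> superset_bound"
proof -
  obtain S where S: "S \<subseteq> W" "card S = Suc k" "finite S"
    using obtain_subset_with_card_n[of "Suc k" W] assms(2) by auto
  have "trace_class W \<subseteq> {E\<in>H. S \<subseteq> E}" unfolding trace_class_def using S by blast
  then have "card (trace_class W) \<le> card {E\<in>H. S \<subseteq> E}" using finite_H by (intro card_mono) auto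
  also have "\<dots> \<le> superset_bound"
    using card_edges_containing_le[OF finite_V edges S(3)] S(2) by (simp add: superset_bound_def)
  finally show ?thesis .
qed

lemma ex_trace_class_member_avoiding:
  assumes "U \<subseteq> Z" "card U = k" "r * superset_bound < card (trace_class U)" "finite T" "card T \<le> r"
  shows "\<exists>F\<in>trace_class U. (F - U) \<inter> T = {}"
proof (rule ccontr)
  assume "\<not> ?thesis"
  then have "trace_class U \<subseteq> (\<Union>t\<in>T - Z. {F\<in>H. insert t U \<subseteq> F})"
    unfolding trace_class_def by blast
  then have "card (trace_class U) \<le> card (\<Union>t\<in>T - Z. {F\<in>H. insert t U \<subseteq> F})"
    using assms(4) finite_H by (intro card_mono) auto
  also have "\<dots> \<le> (\<Sum>t\<in>T - Z. card {F\<in>H. insert t U \<subseteq> F})"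
    using assms(4) by (intro card_UN_le) simp
  also have "\<dots> \<le> (\<Sum>t\<in>T - Z. superset_bound)"
  proof (rule sum_mono)
    fix t assume "t \<in> T - Z"
    then have "card (insert t U) = Suc k"
      using assms(1,2) finite_Z finite_subset by (metis DiffD2 card_insert_disjoint in_mono)
    then show "card {F\<in>H. insert t U \<subseteq> F} \<le> superset_bound"
      using card_edges_containing_le[OF finite_V edges, of "insert t U"] assms(1) finite_Z
      by (simp add: superset_bound_def finite_subset)
  qed
  also have "\<dots> \<le> card T * superset_bound"
    using assms(4) by (simp add: card_mono mult_right_mono)
  also have "\<dots> \<le> r * superset_bound" using assms(5) by simp
  finally show False using assms(3) by simp
qed

lemma heavy_meets_edge:
  assumes "U \<in> heavy i" "E \<in> H"
  shows "U \<inter> E \<noteq> {}"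
proof -
  have "U \<subseteq> Z" "card U = k" "r * superset_bound < card (trace_class U)"
    using assms(1) threshold_ge[of i] by (auto simp: heavy_def)
  then obtain F where F: "F \<in> trace_class U" "(F - U) \<inter> E = {}"
    using ex_trace_class_member_avoiding uniform_H assms(2) by (metis order_refl)
  then have "F \<inter> E \<noteq> {}" using intersecting_H assms(2) unfolding trace_class_def intersecting_def by blast
  then show ?thesis using F(2) by blast
qed

lemma heavy_intersecting: "intersecting (heavy i)"
  unfolding intersecting_def
proof (intro ballI)
  fix W U assume "W \<in> heavy i" "U \<in> heavy i"
  then have "trace_class W \<noteq> {}" "U \<subseteq> Z" by (auto simp: heavy_def)
  then obtain E where "E \<in> H" "E \<inter> Z = W" unfolding trace_class_def by blast
  then show "W \<inter> U \<noteq> {}" using heavy_meets_edge[OF \<open>U \<in> heavy i\<close>] \<open>U \<subseteq> Z\<close> by blast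
qed

lemma card_trace_class_shift:
  assumes "a \<in> W" "A \<subseteq> trace_class W" "y \<in> Z" "\<And>E. E \<in> A \<Longrightarrow> y \<in> link H (E - {a})"
  shows "card A \<le> card (trace_class (insert y (W - {a})))"
proof -
  let ?g = "\<lambda>E. insert y (E - {a})"
  have "E = (if y = a then ?g E else insert a (?g E - {y}))" if "E \<in> A" for E
  proof -
    have "a \<in> E" using assms(1,2) that unfolding trace_class_def by blast
    moreover have "y \<notin> E - {a}" using assms(4)[OF that] unfolding link_def by blast
    ultimately show ?thesis by (cases "y = a") (simp_all add: insert_Diff_if insert_absorb)
  qed
  then have "inj_on ?g A" by (intro inj_onI) metis
  then have "card A = card (?g ` A)" by (rule card_image[symmetric])
  also have "\<dots> \<le> card (trace_class (insert y (W - {a})))"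
  proof (rule card_mono[OF finite_trace_class], rule image_subsetI)
    fix E assume "E \<in> A"
    then have "E \<in> H" "E \<inter> Z = W" "?g E \<in> H" using assms(2) assms(4)[of E]
      unfolding trace_class_def link_def by auto
    then show "?g E \<in> trace_class (insert y (W - {a}))"
      using assms(3) unfolding trace_class_def by blast
  qed
  finally show ?thesis .
qed

lemma link_subset_Z:
  assumes "E \<in> trace_class W" "card W = k" "a \<in> W"
  shows "link H (E - {a}) \<subseteq> Z"
proof
  fix y assume y: "y \<in> link H (E - {a})"
  show "y \<in> Z"
  proof (rule ccontr)
    assume "y \<notin> Z"
    then have "insert y (E - {a}) \<inter> Z = W - {a}" using assms(1) unfolding trace_class_def by blast
    moreover have "card (W - {a}) < k" using assms(2,3) k_pos by (simp add: card_gt_0_iff)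
    ultimately show False using transversal y unfolding link_def by fastforce
  qed
qed

lemma ex_heavy_link_class:
  assumes "i < subsets_bound" "W \<in> heavy i" "a \<in> W"
  shows "\<exists>Y\<subseteq>Z. threshold (Suc i) < card {E \<in> trace_class W. link H (E - {a}) = Y}"
proof -
  have W: "card W = k" "threshold i < card (trace_class W)"
    using assms(2) by (auto simp: heavy_def)
  let ?L = "\<lambda>E. link H (E - {a})"
  have "?L \<in> trace_class W \<rightarrow> Pow Z" using link_subset_Z[OF _ W(1) assms(3)] by blast
  moreover have "finite (Pow Z)" "Pow Z \<noteq> {}" using finite_Z by auto
  ultimately have "\<exists>Y\<in>Pow Z. card (trace_class W) \<le> card (?L -` {Y} \<inter> trace_class W) * card (Pow Z)"
    by (rule pigeonhole_card[OF _ finite_trace_class])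
  then obtain Y where "Y \<subseteq> Z"
    and fibre: "card (trace_class W) \<le> card (?L -` {Y} \<inter> trace_class W) * card (Pow Z)"
    by blast
  let ?A = "?L -` {Y} \<inter> trace_class W"
  have "subsets_bound * threshold (Suc i) = threshold i" by (rule threshold_Suc[OF assms(1), symmetric])
  also have "\<dots> < card ?A * card (Pow Z)" using W(2) fibre by linarith
  also have "\<dots> \<le> card ?A * subsets_bound" using card_Pow_Z_le by simp
  finally have "threshold (Suc i) < card ?A" by (simp add: mult.commute)
  moreover have "?A = {E \<in> trace_class W. ?L E = Y}" by blast
  ultimately show ?thesis using \<open>Y \<subseteq> Z\<close> by auto
qed

lemma heavy_link:
  assumes "i < subsets_bound" "W \<in> heavy i" "a \<in> W"
  shows "\<exists>Y. k \<le> card Y \<and> Y \<inter> (W - {a}) = {} \<and> (\<forall>y\<in>Y. insert y (W - {a}) \<in> heavy (Suc i))"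
proof -
  have W: "W \<subseteq> Z" "card W = k" "finite W"
    using assms(2) finite_Z finite_subset by (auto simp: heavy_def)
  obtain Y where "Y \<subseteq> Z"
    and A: "threshold (Suc i) < card {E \<in> trace_class W. link H (E - {a}) = Y}"
    using ex_heavy_link_class[OF assms] by blast
  then obtain E0 where "E0 \<in> trace_class W" "Y = link H (E0 - {a})"
    by (metis (mono_tags, lifting) card.empty empty_Collect_eq less_zeroE)
  then have "k \<le> card Y" "Y \<inter> (W - {a}) = {}"
    using card_link_ge[OF finite_H uniform_H codegree] assms(3)
    unfolding trace_class_def link_def by auto
  moreover have "insert y (W - {a}) \<in> heavy (Suc i)" if "y \<in> Y" for y
  proof -
    have "y \<in> Z" "y \<notin> W - {a}" using that \<open>Y \<subseteq> Z\<close> \<open>Y \<inter> (W - {a}) = {}\<close> by blast+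
    then have "card (insert y (W - {a})) = k" using W(2,3) assms(3) k_pos by simp
    moreover have "card {E \<in> trace_class W. link H (E - {a}) = Y}
        \<le> card (trace_class (insert y (W - {a})))"
      using that by (intro card_trace_class_shift[OF assms(3) _ \<open>y \<in> Z\<close>]) auto
    ultimately show ?thesis using A W(1) \<open>y \<in> Z\<close> unfolding heavy_def by auto
  qed
  ultimately show ?thesis by blast
qed

lemma heavy_0_nonempty:
  assumes "subsets_bound * (threshold 0 + superset_bound) < card H"
  shows "heavy 0 \<noteq> {}"
proof
  assume heavy_0: "heavy 0 = {}"
  have class_le: "card (trace_class W) \<le> threshold 0 + superset_bound" if "W \<subseteq> Z" for W
  proof -
    consider "card W < k" | "card W = k" | "k < card W" by linarith
    then show ?thesis
    proof cases
      case 2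
      then show ?thesis using heavy_0 that unfolding heavy_def by auto
    next
      case 1
      then show ?thesis using trace_class_empty_if_card_lt by simp
    next
      case 3
      then show ?thesis using card_trace_class_le_if_card_gt[OF that] by linarith
    qed
  qed
  have "H \<subseteq> (\<Union>W\<in>Pow Z. trace_class W)"
  proof
    fix E assume "E \<in> H"
    then have "E \<in> trace_class (E \<inter> Z)" by (simp add: trace_class_def)
    then show "E \<in> (\<Union>W\<in>Pow Z. trace_class W)" by blast
  qed
  then have "card H \<le> card (\<Union>W\<in>Pow Z. trace_class W)"
    using finite_Z finite_trace_class by (intro card_mono) auto
  also have "\<dots> \<le> (\<Sum>W\<in>Pow Z. card (trace_class W))"
    using finite_Z by (intro card_UN_le) simp
  also have "\<dots> \<le> card (Pow Z) * (threshold 0 + superset_bound)"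
    using sum_mono[of "Pow Z" "\<lambda>W. card (trace_class W)" "\<lambda>_. threshold 0 + superset_bound"] class_le
    by simp
  also have "\<dots> \<le> subsets_bound * (threshold 0 + superset_bound)"
    using card_Pow_Z_le by simp
  finally show False using assms by simp
qed

lemma ex_stable_level:
  assumes "heavy 0 \<noteq> {}"
  shows "\<exists>i<subsets_bound. heavy (Suc i) = heavy i"
proof (rule ccontr)
  assume "\<not> ?thesis"
  then have strict: "heavy i \<subset> heavy (Suc i)" if "i < subsets_bound" for i
    using heavy_mono[of i "Suc i"] that by auto
  have "i < card (heavy i)" if "i \<le> subsets_bound" for i
    using that
  proof (induction i)
    case 0
    then show ?case using assms finite_heavy by (simp add: card_gt_0_iff)
  next
    case (Suc i)
    then show ?case using psubset_card_mono[OF finite_heavy strict[of i]] by simp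
  qed
  moreover have "card (heavy subsets_bound) \<le> card (Pow Z)"
    using finite_Z by (intro card_mono) (auto simp: heavy_def)
  ultimately show False using card_Pow_Z_le by (metis le_refl not_le order.trans)
qed

lemma codegree_heavy:
  assumes "i < subsets_bound" "heavy (Suc i) = heavy i"
  shows "codegree_at_least k k (heavy i)"
  unfolding codegree_at_least_def
proof (intro allI impI)
  fix S W assume W: "W \<in> heavy i" and "S \<subseteq> W" and S: "card S = k - 1"
  have "finite W" "card W = k" using W finite_Z finite_subset by (auto simp: heavy_def)
  then have "S \<noteq> W" using S k_pos by auto
  then obtain a where "a \<in> W" "a \<notin> S"
    using \<open>S \<subseteq> W\<close> by blast
  then have "S \<subseteq> W - {a}" "card (W - {a}) = card S"
    using \<open>S \<subseteq> W\<close> S \<open>card W = k\<close> by auto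
  then have "S = W - {a}" using card_seteq[of "W - {a}" S] \<open>finite W\<close> by simp
  obtain Y where "k \<le> card Y" "Y \<inter> S = {}" and Y: "\<forall>y\<in>Y. insert y S \<in> heavy i"
    using heavy_link[OF assms(1) W \<open>a \<in> W\<close>] assms(2) \<open>S = W - {a}\<close> by auto
  have "inj_on (\<lambda>y. insert y S) Y" using \<open>Y \<inter> S = {}\<close> by (intro inj_onI) blast
  then have "card Y = card ((\<lambda>y. insert y S) ` Y)" by (rule card_image[symmetric])
  also have "\<dots> \<le> card {U\<in>heavy i. S \<subseteq> U}"
    using Y finite_heavy[of i] by (intro card_mono) auto
  finally show "k \<le> card {U\<in>heavy i. S \<subseteq> U}" using \<open>k \<le> card Y\<close> by simp
qed

theorem ex_kernel_cover:
  assumes "subsets_bound * (threshold 0 + superset_bound) < card H"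
  shows "\<exists>X\<subseteq>V. card X = 2 * k - 1 \<and> (\<forall>E\<in>H. k \<le> card (E \<inter> X))"
proof -
  obtain i where "i < subsets_bound" "heavy (Suc i) = heavy i"
    using ex_stable_level[OF heavy_0_nonempty[OF assms]] by blast
  then interpret intersecting_codegree_family k "heavy i"
    using finite_heavy heavy_intersecting codegree_heavy finite_Z
    by unfold_locales (auto simp: heavy_def intro: finite_subset)
  obtain X where X: "X \<subseteq> \<Union>(heavy i)" "card X = 2 * k - 1"
    and k_subsets: "\<forall>U\<subseteq>X. card U = k \<longrightarrow> U \<in> heavy i"
    using ex_kernel heavy_0_nonempty[OF assms] heavy_mono[of 0 i] by blast
  have "X \<subseteq> V"
  proof
    fix x assume "x \<in> X"
    then obtain U where "x \<in> U" "U \<in> heavy i" using X(1) by blast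
    then obtain E where "E \<in> trace_class U" by (fastforce simp: heavy_def)
    then show "x \<in> V" using \<open>x \<in> U\<close> edges unfolding trace_class_def by blast
  qed
  have "X \<subseteq> Z" using X(1) by (auto simp: heavy_def)
  then have "finite X" by (rule finite_subset[OF _ finite_Z])
  have "k \<le> card (E \<inter> X)" if "E \<in> H" for E
  proof (rule card_Int_ge_if_meets_k_subsets[OF \<open>finite X\<close> eq_imp_le[OF X(2)[symmetric]]])
    fix U assume "U \<subseteq> X" "card U = k"
    then show "U \<inter> E \<noteq> {}" using k_subsets heavy_meets_edge[OF _ that] by blast
  qed
  then show ?thesis using \<open>X \<subseteq> V\<close> X(2) by blast
qed

end

lemma mult_binomial_less_binomial:
  fixes n j r c D :: nat
  assumes "1 \<le> j" "j \<le> r" "4 * r \<le> n" "c \<le> 2 * r" "D * (2 * r) ^ r < n"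
  shows "D * (n choose (j - 1)) < (n - c) choose j"
proof -
  have "real n / 2 \<le> real (n - c)" "j \<le> n - c" using assms(2-4) by auto
  have "real D * (2 * real j) ^ j \<le> real D * (2 * real r) ^ r"
    using assms(1,2) by (intro mult_left_mono order.trans[OF power_mono power_increasing]) auto
  also have "\<dots> < real n" using assms(5) by (metis of_nat_less_iff of_nat_mult of_nat_numeral of_nat_power)
  finally have "real D * real n ^ (j - 1) * (2 * real j) ^ j < real n * real n ^ (j - 1)"
    using assms(3,5) by (simp add: mult.commute mult.left_commute)
  then have "real D * real n ^ (j - 1) < (real n / (2 * real j)) ^ j"
    using assms(1) by (simp add: power_divide divide_simps power_eq_if[of "real n" j])
  also have "\<dots> \<le> (real (n - c) / real j) ^ j"
    using \<open>real n / 2 \<le> real (n - c)\<close> assms(1) by (intro power_mono) (auto simp: divide_simps)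
  also have "\<dots> \<le> real ((n - c) choose j)" by (rule binomial_ge_n_over_k_pow_k[OF \<open>j \<le> n - c\<close>])
  finally have "real D * real n ^ (j - 1) < real ((n - c) choose j)" .
  moreover have "real (n choose (j - 1)) \<le> real n ^ (j - 1)"
    using binomial_le_pow[of "j - 1" n] assms(1-3) by (simp flip: of_nat_power)
  ultimately have "real D * real (n choose (j - 1)) < real ((n - c) choose j)"
    by (meson le_less_trans mult_left_mono of_nat_0_le_iff)
  then show ?thesis by (simp flip: of_nat_mult)
qed

text \<open>With \<open>B = transversal_bound r k\<close>, \<open>size_factor r k * superset_bound\<close> is the
  quantity \<open>subsets_bound * (threshold 0 + superset_bound)\<close> of \<open>trace_setting\<close>.\<close>

definition size_factor :: "nat \<Rightarrow> nat \<Rightarrow> nat" where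
  "size_factor r k = (let P = 2 ^ transversal_bound r k in P * (r * P ^ P + 1))"

lemma large_family_subset_kernel_family:
  assumes "1 \<le> k" "k \<le> r" "finite V" "uniform_hg r V H" "intersecting H"
    and "k \<le> min_pos_codegree r H"
    and large: "k < r \<Longrightarrow> size_factor r k * (card V choose (r - k - 1)) < card H"
  shows "\<exists>X\<subseteq>V. card X = 2 * k - 1 \<and> H \<subseteq> kernel_family r k V X"
proof -
  have edges: "\<forall>E\<in>H. E \<subseteq> V \<and> card E = r" using assms(4) by (simp add: uniform_hg_def)
  then have uniform: "\<forall>E\<in>H. finite E \<and> card E = r" using assms(3) finite_subset by blast
  have "H \<subseteq> Pow V" using edges by blast
  then have "finite H" using assms(3) finite_subset by auto
  have "H \<noteq> {}" using assms(1,6) by (auto simp: min_pos_codegree_def)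
  then have codegree: "codegree_at_least r k H"
    using min_pos_codegree_ge_iff \<open>finite H\<close> uniform assms(6) by blast
  have "\<exists>X\<subseteq>V. card X = 2 * k - 1 \<and> (\<forall>E\<in>H. k \<le> card (E \<inter> X))"
  proof (cases "k = r")
    case True
    then interpret intersecting_codegree_family k H
      using assms(5) \<open>finite H\<close> uniform codegree by unfold_locales simp_all
    obtain X where "X \<subseteq> \<Union>H" "card X = 2 * k - 1" "\<forall>E\<in>H. k \<le> card (E \<inter> X)"
      using ex_kernel_meeting_edges[OF \<open>H \<noteq> {}\<close>] by blast
    moreover have "\<Union>H \<subseteq> V" using edges by blast
    ultimately show ?thesis by blast
  next
    case False
    then have "k < r" using assms(2) by simp
    obtain Z where "finite Z" "card Z \<le> transversal_bound r k" "\<forall>E\<in>H. k \<le> card (E \<inter> Z)"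
      using ex_bounded_transversal[OF \<open>finite H\<close> \<open>H \<noteq> {}\<close> uniform codegree assms(5) order_refl] by blast
    then interpret trace_setting r k V H Z "transversal_bound r k"
      using assms(1,3,5) edges codegree by unfold_locales
    have "subsets_bound * (threshold 0 + superset_bound) = size_factor r k * (card V choose (r - k - 1))"
      unfolding size_factor_def subsets_bound_def threshold_def superset_bound_def Let_def
      by (simp add: algebra_simps)
    then show ?thesis using ex_kernel_cover large[OF \<open>k < r\<close>] by simp
  qed
  then show ?thesis using edges unfolding kernel_family_def by blast
qed

theorem theorem1:
  fixes r k :: nat
  assumes "1 \<le> k" and "k \<le> r"
  shows "\<exists>n0. \<forall>n\<ge>n0. \<forall>(V::nat set) H.
    finite V \<and> card V = n \<and> uniform_hg r V H \<and> intersecting H \<and>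
    k \<le> min_pos_codegree r H \<and>
    (\<forall>H'. uniform_hg r V H' \<and> intersecting H' \<and> k \<le> min_pos_codegree r H'
           \<longrightarrow> card H' \<le> card H)
    \<longrightarrow> kernel_system r k V H"
proof (intro exI[of _ "4 * r + size_factor r k * (2 * r) ^ r + 1"] allI impI, elim conjE)
  fix n and V :: "nat set" and H
  assume n: "4 * r + size_factor r k * (2 * r) ^ r + 1 \<le> n" and "finite V" "card V = n"
    and H: "uniform_hg r V H" "intersecting H" "k \<le> min_pos_codegree r H"
    and maximal: "\<forall>H'. uniform_hg r V H' \<and> intersecting H' \<and> k \<le> min_pos_codegree r H'
      \<longrightarrow> card H' \<le> card H"
  have "r + k \<le> card V" using n \<open>card V = n\<close> assms(2) by simp
  then have kernel_le: "card (kernel_family r k V X) \<le> card H"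
    if "X \<subseteq> V" "card X = 2 * k - 1" for X
    using maximal kernel_family_admissible[OF \<open>finite V\<close> that assms] by blast
  have "2 * k - 1 \<le> card V" using \<open>r + k \<le> card V\<close> assms(2) by simp
  then obtain X0 where "X0 \<subseteq> V" "card X0 = 2 * k - 1" by (meson obtain_subset_with_card_n)
  have "size_factor r k * (card V choose (r - k - 1)) < card H" if "k < r"
  proof -
    have "size_factor r k * (n choose (r - k - 1)) < (n - (2 * k - 1)) choose (r - k)"
      by (rule mult_binomial_less_binomial[where r = r]) (use that assms n in auto)
    also have "\<dots> \<le> card H"
      using card_kernel_family_ge[OF \<open>finite V\<close> \<open>X0 \<subseteq> V\<close> \<open>card X0 = 2 * k - 1\<close> assms]
        kernel_le[OF \<open>X0 \<subseteq> V\<close> \<open>card X0 = 2 * k - 1\<close>] \<open>card V = n\<close> by simp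
    finally show ?thesis using \<open>card V = n\<close> by simp
  qed
  then obtain X where X: "X \<subseteq> V" "card X = 2 * k - 1" and "H \<subseteq> kernel_family r k V X"
    using large_family_subset_kernel_family[OF assms \<open>finite V\<close> H] by blast
  then have "H = kernel_family r k V X"
    using card_seteq[OF finite_kernel_family[OF \<open>finite V\<close>]] kernel_le[OF X] by blast
  then show "kernel_system r k V H" using X by (auto simp: kernel_system_iff)
qed

end
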